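(* Let $s\ge2$ and let $\varrho\in C^s(\mathbb A,\mathbb R)$, $\mathbb A=\mathbb T^1\times[0,1]$, satisfy $\varrho(\xi,0)=\varrho(\xi,1)=0$ for all $\xi$, with $\|\varrho\|_{C^s}$ sufficiently small. Then there is a unique map $F_\varrho\in C^s(\mathbb A,\mathbb A)$ which fixes every point of $\{\eta=0\}$ and has the form $F_\varrho(\xi,\eta)=(\xi^+,\eta^+)$ with $$\xi^+=\xi+\eta+\varrho(\xi,\eta)\pmod1,\qquad \eta^+=\eta+\varrho(\xi,\eta)+\varrho(\xi^+,\eta^+).$$ Moreover $F_\varrho(\xi,1)=(\xi,1)$ and $F_\varrho^{-1}(\xi,\eta)=(\xi^-,\eta^-)$ with $\xi^-=\xi-\eta+\varrho(\xi,\eta)\pmod1$ and $\eta^-=\eta-\varrho(\xi,\eta)-\varrho(\xi^-,\eta^-)$.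
   Context: $\mathbb T^1=\mathbb R/\mathbb Z$; $(\xi,\eta)$ are the natural coordinates on $\mathbb A=\mathbb T^1\times[0,1]$. *)

theory Defs
  imports Complex_Main
begin

text \<open>The annulus A = T^1 x [0,1] is represented by its universal cover, the strip
  R x [0,1]; functions on A are functions on the strip that are 1-periodic in xi;
  maps A -> A are represented by lifts (maps of the strip to itself compatible
  with the identification xi ~ xi + 1).\<close>

definition Astrip :: "(real \<times> real) set" where
  "Astrip = UNIV \<times> {0..1}"

definition eqA :: "real \<times> real \<Rightarrow> real \<times> real \<Rightarrow> bool" where
  "eqA p q \<longleftrightarrow> fst p - fst q \<in> \<int> \<and> snd p = snd q"

definition A_map :: "(real \<times> real \<Rightarrow> real \<times> real) \<Rightarrow> bool" where
  "A_map F \<longleftrightarrow> (\<forall>p\<in>Astrip. F p \<in> Astrip) \<and>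
     (\<forall>p\<in>Astrip. \<forall>q\<in>Astrip. eqA p q \<longrightarrow> eqA (F p) (F q))"

definition A_fun :: "(real \<times> real \<Rightarrow> real) \<Rightarrow> bool" where
  "A_fun g \<longleftrightarrow> (\<forall>\<xi> \<eta>. \<eta> \<in> {0..1} \<longrightarrow> g (\<xi> + 1, \<eta>) = g (\<xi>, \<eta>))"

definition pd1 :: "(real \<times> real \<Rightarrow> real) \<Rightarrow> real \<times> real \<Rightarrow> real" where
  "pd1 g p = (THE d. ((\<lambda>t. g (t, snd p)) has_real_derivative d) (at (fst p)))"

definition pd2 :: "(real \<times> real \<Rightarrow> real) \<Rightarrow> real \<times> real \<Rightarrow> real" where
  "pd2 g p = (THE d. ((\<lambda>t. g (fst p, t)) has_real_derivative d) (at (snd p) within {0..1}))"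

fun partials :: "nat \<Rightarrow> (real \<times> real \<Rightarrow> real) \<Rightarrow> (real \<times> real \<Rightarrow> real) set" where
  "partials 0 g = {g}"
| "partials (Suc k) g = (\<Union>h\<in>partials k g. {pd1 h, pd2 h})"

definition Cs_on_A :: "nat \<Rightarrow> (real \<times> real \<Rightarrow> real) \<Rightarrow> bool" where
  "Cs_on_A s g \<longleftrightarrow>
     (\<forall>k<s. \<forall>h\<in>partials k g. \<forall>p\<in>Astrip.
        (\<exists>d. ((\<lambda>t. h (t, snd p)) has_real_derivative d) (at (fst p))) \<and>
        (\<exists>d. ((\<lambda>t. h (fst p, t)) has_real_derivative d) (at (snd p) within {0..1}))) \<and>
     (\<forall>k\<le>s. \<forall>h\<in>partials k g. continuous_on Astrip h)"

definition Cs_norm :: "nat \<Rightarrow> (real \<times> real \<Rightarrow> real) \<Rightarrow> real" where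
  "Cs_norm s g = Sup {\<bar>h p\<bar> | k h p. k \<le> s \<and> h \<in> partials k g \<and> p \<in> Astrip}"

definition Cs_map :: "nat \<Rightarrow> (real \<times> real \<Rightarrow> real \<times> real) \<Rightarrow> bool" where
  "Cs_map s F \<longleftrightarrow> Cs_on_A s (\<lambda>p. fst (F p)) \<and> Cs_on_A s (\<lambda>p. snd (F p))"

definition is_F :: "nat \<Rightarrow> (real \<times> real \<Rightarrow> real) \<Rightarrow> (real \<times> real \<Rightarrow> real \<times> real) \<Rightarrow> bool" where
  "is_F s \<rho> F \<longleftrightarrow> A_map F \<and> Cs_map s F \<and>
     (\<forall>\<xi>. eqA (F (\<xi>, 0)) (\<xi>, 0)) \<and>
     (\<forall>p\<in>Astrip. fst (F p) - (fst p + snd p + \<rho> p) \<in> \<int> \<and>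
                 snd (F p) = snd p + \<rho> p + \<rho> (F p))"

end

theory Submission
  imports Defs "HOL-Analysis.Analysis"
begin

text \<open>If the partial derivatives of \<rho> are bounded by 1/2 (which \<open>Cs_norm s \<rho> < 1/2\<close>
  guarantees), then for every x the map t \<mapsto> t \<plusminus> \<rho>(x, t) is a bijection of [0, 1]: it fixes
  0 and 1 because \<rho> vanishes on the boundary, and it is injective because \<rho>(x, \<cdot>) is
  1/2-Lipschitz. The first component of F is forced up to an integer to be
  xi_plus = \<xi> + \<eta> + \<rho>(\<xi>, \<eta>), and the second one is then the unique solution t of
  t - \<rho>(xi_plus, t) = \<eta> + \<rho>(\<xi>, \<eta>); this gives existence, uniqueness and the boundary
  behaviour of F, and the same construction with the opposite sign gives its inverse.
  For regularity, the mean value theorem writes the increment of \<rho> along a curve with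
  coefficients converging to the partial derivatives of \<rho>. This yields the chain rule and
  differentiates the implicit equation for the second component, whose partial derivatives
  are then rational expressions in the partial derivatives of \<rho> at p and at F p; induction
  on the order gives C^s.\<close>

section \<open>C^k functions on the strip\<close>

definition has_partial1 :: "(real \<times> real \<Rightarrow> real) \<Rightarrow> real \<Rightarrow> real \<times> real \<Rightarrow> bool" where
  "has_partial1 g d p \<longleftrightarrow> ((\<lambda>t. g (t, snd p)) has_real_derivative d) (at (fst p))"

definition has_partial2 :: "(real \<times> real \<Rightarrow> real) \<Rightarrow> real \<Rightarrow> real \<times> real \<Rightarrow> bool" where
  "has_partial2 g d p \<longleftrightarrow> ((\<lambda>t. g (fst p, t)) has_real_derivative d) (at (snd p) within {0..1})"

lemma mem_Astrip_iff: "p \<in> Astrip \<longleftrightarrow> snd p \<in> {0..1}"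
  by (cases p) (auto simp: Astrip_def)

lemma has_partial1_imp_pd1: "has_partial1 g d p \<Longrightarrow> pd1 g p = d"
  unfolding has_partial1_def pd1_def using DERIV_unique by blast

lemma has_partial2_imp_pd2:
  assumes "has_partial2 g d p" and "p \<in> Astrip"
  shows "pd2 g p = d"
  unfolding pd2_def
proof (rule the_equality)
  show "((\<lambda>t. g (fst p, t)) has_real_derivative d) (at (snd p) within {0..1})"
    using assms(1) by (simp add: has_partial2_def)
  fix e assume e: "((\<lambda>t. g (fst p, t)) has_real_derivative e) (at (snd p) within {0..1})"
  have "at (snd p) within {0..1} \<noteq> bot"
    using assms(2) islimpt_Icc[of 0 1 "snd p"] by (simp add: mem_Astrip_iff trivial_limit_within)
  from tendsto_unique[OF this e[unfolded has_field_derivative_iff]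
      assms(1)[unfolded has_partial2_def has_field_derivative_iff]]
  show "e = d" .
qed

lemma has_partial1_cong:
  assumes "has_partial1 f d p" "p \<in> Astrip" "\<forall>q\<in>Astrip. f q = g q"
  shows "has_partial1 g d p"
proof -
  have "(\<lambda>t. f (t, snd p)) = (\<lambda>t. g (t, snd p))"
    using assms(2,3) by (auto simp: mem_Astrip_iff)
  then show ?thesis using assms(1) unfolding has_partial1_def by simp
qed

lemma has_partial2_cong:
  assumes "has_partial2 f d p" "p \<in> Astrip" "\<forall>q\<in>Astrip. f q = g q"
  shows "has_partial2 g d p"
  using assms unfolding has_partial2_def
  by (auto simp: mem_Astrip_iff intro: has_field_derivative_transform_within[where d=1])

lemma partials_Suc_outer: "partials (Suc k) g = partials k (pd1 g) \<union> partials k (pd2 g)"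
  by (induction k arbitrary: g) auto

lemma finite_partials: "finite (partials k g)"
  by (induction k) auto

lemma Cs_on_A_0_iff: "Cs_on_A 0 g \<longleftrightarrow> continuous_on Astrip g"
  by (simp add: Cs_on_A_def)

lemma Cs_on_A_Suc_iff:
  "Cs_on_A (Suc k) g \<longleftrightarrow> continuous_on Astrip g \<and>
     (\<forall>p\<in>Astrip. (\<exists>d. has_partial1 g d p) \<and> (\<exists>d. has_partial2 g d p)) \<and>
     Cs_on_A k (pd1 g) \<and> Cs_on_A k (pd2 g)"
proof -
  define D where "D = (\<lambda>j g. \<forall>h\<in>partials j g. \<forall>p\<in>Astrip.
    (\<exists>d. has_partial1 h d p) \<and> (\<exists>d. has_partial2 h d p))"
  define C where "C = (\<lambda>j g. \<forall>h\<in>partials j g. continuous_on Astrip h)"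
  have unfold: "Cs_on_A k g \<longleftrightarrow> (\<forall>j<k. D j g) \<and> (\<forall>j<Suc k. C j g)" for k g
    unfolding Cs_on_A_def D_def C_def has_partial1_def has_partial2_def less_Suc_eq_le by blast
  have "D (Suc j) g \<longleftrightarrow> D j (pd1 g) \<and> D j (pd2 g)" "C (Suc j) g \<longleftrightarrow> C j (pd1 g) \<and> C j (pd2 g)" for j
    unfolding D_def C_def partials_Suc_outer by blast+
  moreover have "D 0 g \<longleftrightarrow> (\<forall>p\<in>Astrip. (\<exists>d. has_partial1 g d p) \<and> (\<exists>d. has_partial2 g d p))"
    "C 0 g \<longleftrightarrow> continuous_on Astrip g"
    unfolding D_def C_def by simp_all
  ultimately show ?thesis
    unfolding unfold All_less_Suc2[where n=k] All_less_Suc2[where n="Suc k"] by blast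
qed

lemma Cs_on_A_Suc_imp: "Cs_on_A (Suc k) g \<Longrightarrow> Cs_on_A k g"
  unfolding Cs_on_A_def by (blast intro: less_SucI le_SucI)

lemma Cs_on_A_mono: "Cs_on_A k g \<Longrightarrow> j \<le> k \<Longrightarrow> Cs_on_A j g"
  by (induction k) (auto simp: le_Suc_eq dest: Cs_on_A_Suc_imp)

lemma Cs_on_A_imp_continuous: "Cs_on_A k g \<Longrightarrow> continuous_on Astrip g"
  using Cs_on_A_mono[of k g 0] by (simp add: Cs_on_A_0_iff)

lemma Cs_on_A_cong: "Cs_on_A k f \<Longrightarrow> \<forall>q\<in>Astrip. f q = g q \<Longrightarrow> Cs_on_A k g"
proof (induction k arbitrary: f g)
  case 0
  then show ?case by (simp add: Cs_on_A_0_iff cong: continuous_on_cong)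
next
  case (Suc k)
  then have f: "continuous_on Astrip f" "Cs_on_A k (pd1 f)" "Cs_on_A k (pd2 f)"
    and ex: "\<forall>p\<in>Astrip. (\<exists>d. has_partial1 f d p) \<and> (\<exists>d. has_partial2 f d p)"
    unfolding Cs_on_A_Suc_iff by blast+
  have g: "has_partial1 g (pd1 f q) q \<and> has_partial2 g (pd2 f q) q" if q: "q \<in> Astrip" for q
  proof -
    obtain d1 d2 where "has_partial1 f d1 q" "has_partial2 f d2 q" using ex q by blast
    with q have "has_partial1 f (pd1 f q) q" "has_partial2 f (pd2 f q) q"
      using has_partial1_imp_pd1 has_partial2_imp_pd2 by simp_all
    with q Suc.prems(2) show ?thesis using has_partial1_cong has_partial2_cong by blast
  qed
  then have "\<forall>q\<in>Astrip. pd1 f q = pd1 g q" "\<forall>q\<in>Astrip. pd2 f q = pd2 g q"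
    using has_partial1_imp_pd1 has_partial2_imp_pd2 by metis+
  then have "Cs_on_A k (pd1 g)" "Cs_on_A k (pd2 g)"
    using Suc.IH[OF f(2)] Suc.IH[OF f(3)] by blast+
  moreover have "continuous_on Astrip g"
    using f(1) Suc.prems(2) continuous_on_cong[of Astrip Astrip f g] by simp
  ultimately show ?case using g unfolding Cs_on_A_Suc_iff by blast
qed

lemma Cs_on_AI:
  assumes "continuous_on Astrip f"
    and "\<And>p. p \<in> Astrip \<Longrightarrow> has_partial1 f (Dxi p) p" "Cs_on_A k Dxi"
    and "\<And>p. p \<in> Astrip \<Longrightarrow> has_partial2 f (Deta p) p" "Cs_on_A k Deta"
  shows "Cs_on_A (Suc k) f"
proof -
  have "\<forall>q\<in>Astrip. Dxi q = pd1 f q" "\<forall>q\<in>Astrip. Deta q = pd2 f q"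
    using assms(2,4) has_partial1_imp_pd1 has_partial2_imp_pd2 by metis+
  then have "Cs_on_A k (pd1 f)" "Cs_on_A k (pd2 f)"
    using Cs_on_A_cong assms(3,5) by blast+
  with assms(1,2,4) show ?thesis unfolding Cs_on_A_Suc_iff by blast
qed

lemma Cs_on_AD:
  assumes "Cs_on_A (Suc k) f"
  shows "continuous_on Astrip f"
    and "\<And>p. p \<in> Astrip \<Longrightarrow> has_partial1 f (pd1 f p) p" "Cs_on_A k (pd1 f)"
    and "\<And>p. p \<in> Astrip \<Longrightarrow> has_partial2 f (pd2 f p) p" "Cs_on_A k (pd2 f)"
proof -
  show "continuous_on Astrip f" "Cs_on_A k (pd1 f)" "Cs_on_A k (pd2 f)"
    using assms unfolding Cs_on_A_Suc_iff by blast+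
  fix p assume p: "p \<in> Astrip"
  then obtain d1 d2 where "has_partial1 f d1 p" "has_partial2 f d2 p"
    using assms unfolding Cs_on_A_Suc_iff by blast
  with p show "has_partial1 f (pd1 f p) p" "has_partial2 f (pd2 f p) p"
    using has_partial1_imp_pd1 has_partial2_imp_pd2 by simp_all
qed

lemma Cs_on_A_const: "Cs_on_A k (\<lambda>p. c)"
proof (induction k arbitrary: c)
  case 0
  then show ?case by (simp add: Cs_on_A_0_iff)
next
  case (Suc k)
  show ?case
    by (rule Cs_on_AI[where Dxi="\<lambda>p. 0" and Deta="\<lambda>p. 0"])
      (auto simp: has_partial1_def has_partial2_def Suc.IH)
qed

lemma Cs_on_A_fst: "Cs_on_A k fst"
proof (cases k)
  case (Suc j)
  show ?thesis unfolding Suc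
    by (rule Cs_on_AI[where Dxi="\<lambda>p. 1" and Deta="\<lambda>p. 0"])
      (auto simp: has_partial1_def has_partial2_def Cs_on_A_const continuous_on_fst)
qed (simp add: Cs_on_A_0_iff continuous_on_fst)

lemma Cs_on_A_snd: "Cs_on_A k snd"
proof (cases k)
  case (Suc j)
  show ?thesis unfolding Suc
    by (rule Cs_on_AI[where Dxi="\<lambda>p. 0" and Deta="\<lambda>p. 1"])
      (auto simp: has_partial1_def has_partial2_def Cs_on_A_const continuous_on_snd)
qed (simp add: Cs_on_A_0_iff continuous_on_snd)

lemma Cs_on_A_add: "Cs_on_A k f \<Longrightarrow> Cs_on_A k g \<Longrightarrow> Cs_on_A k (\<lambda>p. f p + g p)"
proof (induction k arbitrary: f g)
  case 0
  then show ?case by (simp add: Cs_on_A_0_iff continuous_on_add)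
next
  case (Suc k)
  note f = Cs_on_AD[OF Suc.prems(1)] and g = Cs_on_AD[OF Suc.prems(2)]
  show ?case
  proof (rule Cs_on_AI[where Dxi="\<lambda>p. pd1 f p + pd1 g p" and Deta="\<lambda>p. pd2 f p + pd2 g p"])
    show "continuous_on Astrip (\<lambda>p. f p + g p)" using f(1) g(1) by (rule continuous_on_add)
    show "has_partial1 (\<lambda>p. f p + g p) (pd1 f p + pd1 g p) p" if "p \<in> Astrip" for p
      using f(2)[OF that] g(2)[OF that] unfolding has_partial1_def by (rule DERIV_add)
    show "has_partial2 (\<lambda>p. f p + g p) (pd2 f p + pd2 g p) p" if "p \<in> Astrip" for p
      using f(4)[OF that] g(4)[OF that] unfolding has_partial2_def by (rule DERIV_add)
  qed (intro Suc.IH f(3,5) g(3,5))+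
qed

lemma Cs_on_A_mult: "Cs_on_A k f \<Longrightarrow> Cs_on_A k g \<Longrightarrow> Cs_on_A k (\<lambda>p. f p * g p)"
proof (induction k arbitrary: f g)
  case 0
  then show ?case by (simp add: Cs_on_A_0_iff continuous_on_mult)
next
  case (Suc k)
  note f = Cs_on_AD[OF Suc.prems(1)] and g = Cs_on_AD[OF Suc.prems(2)]
  have fk: "Cs_on_A k f" and gk: "Cs_on_A k g" using Suc.prems Cs_on_A_Suc_imp by blast+
  show ?case
  proof (rule Cs_on_AI[where Dxi="\<lambda>p. pd1 f p * g p + f p * pd1 g p"
                        and Deta="\<lambda>p. pd2 f p * g p + f p * pd2 g p"])
    show "continuous_on Astrip (\<lambda>p. f p * g p)" using f(1) g(1) by (rule continuous_on_mult)
    show "has_partial1 (\<lambda>p. f p * g p) (pd1 f p * g p + f p * pd1 g p) p" if "p \<in> Astrip" for p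
      using DERIV_mult[OF f(2)[OF that, unfolded has_partial1_def] g(2)[OF that, unfolded has_partial1_def]]
      by (simp add: has_partial1_def mult.commute)
    show "has_partial2 (\<lambda>p. f p * g p) (pd2 f p * g p + f p * pd2 g p) p" if "p \<in> Astrip" for p
      using DERIV_mult[OF f(4)[OF that, unfolded has_partial2_def] g(4)[OF that, unfolded has_partial2_def]]
      by (simp add: has_partial2_def mult.commute)
  qed (intro Cs_on_A_add Suc.IH f(3,5) g(3,5) fk gk)+
qed

lemma Cs_on_A_diff:
  assumes "Cs_on_A k f" "Cs_on_A k g"
  shows "Cs_on_A k (\<lambda>p. f p - g p)"
proof -
  have "Cs_on_A k (\<lambda>p. f p + (- 1) * g p)"
    by (intro Cs_on_A_add Cs_on_A_mult Cs_on_A_const assms)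
  then show ?thesis by simp
qed

lemma Cs_on_A_inverse:
  "Cs_on_A k f \<Longrightarrow> \<forall>p\<in>Astrip. f p \<noteq> 0 \<Longrightarrow> Cs_on_A k (\<lambda>p. inverse (f p))"
proof (induction k arbitrary: f)
  case 0
  then show ?case by (simp add: Cs_on_A_0_iff continuous_on_inverse)
next
  case (Suc k)
  note f = Cs_on_AD[OF Suc.prems(1)]
  have "Cs_on_A k (\<lambda>p. inverse (f p))"
    using Suc.IH[OF Cs_on_A_Suc_imp[OF Suc.prems(1)] Suc.prems(2)] .
  then have "Cs_on_A k (\<lambda>p. 0 - inverse (f p) * inverse (f p))"
    by (intro Cs_on_A_diff Cs_on_A_const Cs_on_A_mult)
  then have sq: "Cs_on_A k (\<lambda>p. - (inverse (f p) * inverse (f p)))" by simp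
  show ?case
  proof (rule Cs_on_AI[where Dxi="\<lambda>p. pd1 f p * - (inverse (f p) * inverse (f p))"
                        and Deta="\<lambda>p. pd2 f p * - (inverse (f p) * inverse (f p))"])
    show "continuous_on Astrip (\<lambda>p. inverse (f p))"
      using f(1) Suc.prems(2) by (rule continuous_on_inverse)
    show "has_partial1 (\<lambda>p. inverse (f p)) (pd1 f p * - (inverse (f p) * inverse (f p))) p"
      if "p \<in> Astrip" for p
      using DERIV_inverse'[OF f(2)[OF that, unfolded has_partial1_def]] Suc.prems(2) that
      by (simp add: has_partial1_def mult_ac)
    show "has_partial2 (\<lambda>p. inverse (f p)) (pd2 f p * - (inverse (f p) * inverse (f p))) p"
      if "p \<in> Astrip" for p
      using DERIV_inverse'[OF f(4)[OF that, unfolded has_partial2_def]] Suc.prems(2) that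
      by (simp add: has_partial2_def mult_ac)
  qed (intro Cs_on_A_mult f(3,5) sq)+
qed

lemma Cs_on_A_divide:
  assumes "Cs_on_A k f" "Cs_on_A k g" "\<forall>p\<in>Astrip. g p \<noteq> 0"
  shows "Cs_on_A k (\<lambda>p. f p / g p)"
  using Cs_on_A_mult[OF assms(1) Cs_on_A_inverse[OF assms(2,3)]] by (simp add: divide_inverse)

section \<open>Mean value theorem, chain rule and implicit differentiation\<close>

lemma mean_value_between:
  fixes f :: "real \<Rightarrow> real"
  assumes "\<And>x. x \<in> {min a b..max a b} \<Longrightarrow>
    (f has_real_derivative f' x) (at x within {min a b..max a b})"
  shows "\<exists>\<theta>\<in>{min a b..max a b}. f b - f a = (b - a) * f' \<theta>"
proof (cases "a \<le> b")
  case True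
  then have "\<exists>x\<in>{a..b}. f b - f a = f' x * (b - a)"
    using assms by (intro mvt_very_simple) (auto simp: has_field_derivative_def)
  then show ?thesis using True by (auto simp: mult.commute)
next
  case False
  then have "\<exists>x\<in>{b..a}. f a - f b = f' x * (a - b)"
    using assms by (intro mvt_very_simple) (auto simp: has_field_derivative_def)
  then obtain x where "x \<in> {b..a}" "f a - f b = f' x * (a - b)" by blast
  then show ?thesis using False by (intro bexI[of _ x]) (auto simp: algebra_simps)
qed

definition has_partials_on_A :: "(real \<times> real \<Rightarrow> real) \<Rightarrow> bool" where
  "has_partials_on_A g \<longleftrightarrow> (\<forall>q\<in>Astrip. has_partial1 g (pd1 g q) q \<and> has_partial2 g (pd2 g q) q)"

lemma Cs_on_A_imp_has_partials: "Cs_on_A (Suc k) g \<Longrightarrow> has_partials_on_A g"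
  unfolding has_partials_on_A_def using Cs_on_AD(2,4) by blast

lemma increment_mean_value:
  assumes g: "has_partials_on_A g" and p: "(x, y) \<in> Astrip" and p': "(x', y') \<in> Astrip"
  obtains \<theta>1 \<theta>2 where "\<theta>1 \<in> {min x x'..max x x'}" "\<theta>2 \<in> {min y y'..max y y'}"
    "g (x', y') - g (x, y) = (x' - x) * pd1 g (\<theta>1, y') + (y' - y) * pd2 g (x, \<theta>2)"
proof -
  have y: "y \<in> {0..1}" "y' \<in> {0..1}" using p p' by (auto simp: mem_Astrip_iff)
  have "\<exists>\<theta>\<in>{min x x'..max x x'}. g (x', y') - g (x, y') = (x' - x) * pd1 g (\<theta>, y')"
  proof (rule mean_value_between[of x x' "\<lambda>t. g (t, y')"])
    fix t
    have "(t, y') \<in> Astrip" using y by (simp add: mem_Astrip_iff)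
    then show "((\<lambda>t. g (t, y')) has_real_derivative pd1 g (t, y')) (at t within {min x x'..max x x'})"
      using g unfolding has_partials_on_A_def has_partial1_def
      by (fastforce intro: has_field_derivative_at_within)
  qed
  moreover have "\<exists>\<theta>\<in>{min y y'..max y y'}. g (x, y') - g (x, y) = (y' - y) * pd2 g (x, \<theta>)"
  proof (rule mean_value_between[of y y' "\<lambda>t. g (x, t)"])
    fix t assume t: "t \<in> {min y y'..max y y'}"
    have sub: "{min y y'..max y y'} \<subseteq> {0..1}" using y by auto
    then have "(x, t) \<in> Astrip" using t by (auto simp: mem_Astrip_iff)
    then show "((\<lambda>t. g (x, t)) has_real_derivative pd2 g (x, t)) (at t within {min y y'..max y y'})"
      using g sub unfolding has_partials_on_A_def has_partial2_def
      by (fastforce intro: DERIV_subset)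
  qed
  ultimately obtain \<theta>1 \<theta>2 where \<theta>: "\<theta>1 \<in> {min x x'..max x x'}" "\<theta>2 \<in> {min y y'..max y y'}"
    and e1: "g (x', y') - g (x, y') = (x' - x) * pd1 g (\<theta>1, y')"
    and e2: "g (x, y') - g (x, y) = (y' - y) * pd2 g (x, \<theta>2)"
    by blast
  have "g (x', y') - g (x, y) = (x' - x) * pd1 g (\<theta>1, y') + (y' - y) * pd2 g (x, \<theta>2)"
    using e1 e2 by linarith
  with \<theta> show ?thesis by (rule that)
qed

lemma tendsto_between:
  fixes U \<theta> :: "'a \<Rightarrow> real"
  assumes "(U \<longlongrightarrow> u) F" "eventually (\<lambda>t. \<theta> t \<in> {min u (U t)..max u (U t)}) F"
  shows "(\<theta> \<longlongrightarrow> u) F"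
proof -
  have "eventually (\<lambda>t. norm (\<theta> t - u) \<le> \<bar>U t - u\<bar>) F"
    using assms(2) by eventually_elim auto
  moreover have "((\<lambda>t. \<bar>U t - u\<bar>) \<longlongrightarrow> 0) F"
    using assms(1) by (intro tendsto_rabs_zero LIM_zero)
  ultimately show ?thesis by (rule LIM_zero_cancel[OF Lim_null_comparison])
qed

lemma eventually_at_within_memI:
  "(\<And>t. t \<in> S \<Longrightarrow> t \<noteq> t0 \<Longrightarrow> P t) \<Longrightarrow> eventually P (at t0 within S)"
  unfolding eventually_at_filter by (simp add: always_eventually)

text \<open>The coefficients are partial derivatives at mean value points, which converge by
  continuity of the partial derivatives.\<close>

lemma increment_factorization:
  assumes g: "has_partials_on_A g" "continuous_on Astrip (pd1 g)" "continuous_on Astrip (pd2 g)"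
    and S: "\<And>t. t \<in> S \<Longrightarrow> (U t, V t) \<in> Astrip" and z: "z \<in> S"
    and U: "(U \<longlongrightarrow> U z) (at z within S)" and V: "(V \<longlongrightarrow> V z) (at z within S)"
  obtains a b where "(a \<longlongrightarrow> pd1 g (U z, V z)) (at z within S)"
    "(b \<longlongrightarrow> pd2 g (U z, V z)) (at z within S)"
    "\<And>t. t \<in> S \<Longrightarrow> g (U t, V t) - g (U z, V z) = (U t - U z) * a t + (V t - V z) * b t"
proof -
  define u v where "u = U z" and "v = V z"
  have q: "(u, v) \<in> Astrip" using S z by (simp add: u_def v_def)
  define P where "P t \<theta> \<longleftrightarrow> fst \<theta> \<in> {min u (U t)..max u (U t)} \<and> snd \<theta> \<in> {min v (V t)..max v (V t)} \<and>
    g (U t, V t) - g (u, v) = (U t - u) * pd1 g (fst \<theta>, V t) + (V t - v) * pd2 g (u, snd \<theta>)" for t \<theta>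
  have "\<forall>t\<in>S. \<exists>\<theta>. P t \<theta>"
  proof
    fix t assume "t \<in> S"
    obtain \<theta>1 \<theta>2 where "P t (\<theta>1, \<theta>2)"
      by (rule increment_mean_value[OF g(1) q S[OF \<open>t \<in> S\<close>]]) (auto simp: P_def)
    then show "\<exists>\<theta>. P t \<theta>" ..
  qed
  then obtain \<theta> where "\<forall>t\<in>S. P t (\<theta> t)" by (rule bchoice[THEN exE])
  then have \<theta>: "fst (\<theta> t) \<in> {min u (U t)..max u (U t)} \<and>
      snd (\<theta> t) \<in> {min v (V t)..max v (V t)} \<and>
      g (U t, V t) - g (u, v) = (U t - u) * pd1 g (fst (\<theta> t), V t) + (V t - v) * pd2 g (u, snd (\<theta> t))"
    if "t \<in> S" for t
    using that unfolding P_def by blast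
  have \<theta>1: "((\<lambda>t. fst (\<theta> t)) \<longlongrightarrow> u) (at z within S)"
    by (rule tendsto_between[OF U[folded u_def]], rule eventually_at_within_memI) (use \<theta> in blast)
  have \<theta>2: "((\<lambda>t. snd (\<theta> t)) \<longlongrightarrow> v) (at z within S)"
    by (rule tendsto_between[OF V[folded v_def]], rule eventually_at_within_memI) (use \<theta> in blast)
  have in_strip: "\<forall>\<^sub>F t in at z within S. (fst (\<theta> t), V t) \<in> Astrip \<and> (u, snd (\<theta> t)) \<in> Astrip"
  proof (rule eventually_at_within_memI)
    fix t assume "t \<in> S"
    then show "(fst (\<theta> t), V t) \<in> Astrip \<and> (u, snd (\<theta> t)) \<in> Astrip"
      using \<theta>[of t] S[of t] q by (auto simp: mem_Astrip_iff min_def max_def split: if_splits)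
  qed
  have ev1: "\<forall>\<^sub>F t in at z within S. (fst (\<theta> t), V t) \<in> Astrip"
    and ev2: "\<forall>\<^sub>F t in at z within S. (u, snd (\<theta> t)) \<in> Astrip"
    using in_strip by (rule eventually_mono, blast)+
  show ?thesis
  proof (rule that)
    show "((\<lambda>t. pd1 g (fst (\<theta> t), V t)) \<longlongrightarrow> pd1 g (U z, V z)) (at z within S)"
      using continuous_on_tendsto_compose[OF g(2) tendsto_Pair[OF \<theta>1 V[folded v_def]] q ev1]
      by (simp add: u_def v_def)
    show "((\<lambda>t. pd2 g (u, snd (\<theta> t))) \<longlongrightarrow> pd2 g (U z, V z)) (at z within S)"
      using continuous_on_tendsto_compose[OF g(3) tendsto_Pair[OF tendsto_const \<theta>2] q ev2]
      by (simp add: u_def v_def)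
  qed (use \<theta> in \<open>simp add: u_def v_def\<close>)
qed

lemma chain_rule_partials:
  assumes g: "has_partials_on_A g" "continuous_on Astrip (pd1 g)" "continuous_on Astrip (pd2 g)"
    and S: "\<And>t. t \<in> S \<Longrightarrow> (U t, V t) \<in> Astrip" and z: "z \<in> S"
    and dU: "(U has_real_derivative dU) (at z within S)"
    and dV: "(V has_real_derivative dV) (at z within S)"
  shows "((\<lambda>t. g (U t, V t)) has_real_derivative
           pd1 g (U z, V z) * dU + pd2 g (U z, V z) * dV) (at z within S)"
proof -
  obtain a b where a: "(a \<longlongrightarrow> pd1 g (U z, V z)) (at z within S)"
    and b: "(b \<longlongrightarrow> pd2 g (U z, V z)) (at z within S)"
    and incr: "\<And>t. t \<in> S \<Longrightarrow> g (U t, V t) - g (U z, V z) = (U t - U z) * a t + (V t - V z) * b t"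
    using increment_factorization[where U=U and V=V, OF g S z
        DERIV_continuous[OF dU, unfolded continuous_within]
        DERIV_continuous[OF dV, unfolded continuous_within]]
    by blast
  have "((\<lambda>t. (U t - U z) / (t - z)) \<longlongrightarrow> dU) (at z within S)"
    and "((\<lambda>t. (V t - V z) / (t - z)) \<longlongrightarrow> dV) (at z within S)"
    using dU dV by (simp_all add: has_field_derivative_iff)
  from tendsto_add[OF tendsto_mult[OF this(1) a] tendsto_mult[OF this(2) b]]
  have "((\<lambda>t. (g (U t, V t) - g (U z, V z)) / (t - z))
      \<longlongrightarrow> dU * pd1 g (U z, V z) + dV * pd2 g (U z, V z)) (at z within S)"
    by (rule Lim_transform_eventually)
      (rule eventually_at_within_memI, simp add: incr add_divide_distrib)
  then show ?thesis by (simp add: has_field_derivative_iff mult.commute)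
qed

text \<open>Only continuity of T is assumed: its differentiability comes out of the factorization.\<close>

lemma implicit_derivative:
  assumes g: "has_partials_on_A g" "continuous_on Astrip (pd1 g)" "continuous_on Astrip (pd2 g)"
    and S: "\<And>t. t \<in> S \<Longrightarrow> (X t, T t) \<in> Astrip" and t0: "t0 \<in> S"
    and eq: "\<And>t. t \<in> S \<Longrightarrow> T t - g (X t, T t) = C t"
    and dX: "(X has_real_derivative dX) (at t0 within S)"
    and dC: "(C has_real_derivative dC) (at t0 within S)"
    and T: "(T \<longlongrightarrow> T t0) (at t0 within S)"
    and nondeg: "pd2 g (X t0, T t0) \<noteq> 1"
  shows "(T has_real_derivative
           (dC + pd1 g (X t0, T t0) * dX) / (1 - pd2 g (X t0, T t0))) (at t0 within S)"
proof -
  obtain a b where a: "(a \<longlongrightarrow> pd1 g (X t0, T t0)) (at t0 within S)"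
    and b: "(b \<longlongrightarrow> pd2 g (X t0, T t0)) (at t0 within S)"
    and incr: "\<And>t. t \<in> S \<Longrightarrow> g (X t, T t) - g (X t0, T t0) = (X t - X t0) * a t + (T t - T t0) * b t"
    using increment_factorization[where U=X and V=T, OF g S t0
        DERIV_continuous[OF dX, unfolded continuous_within] T]
    by blast
  have "((\<lambda>t. (C t - C t0) / (t - t0)) \<longlongrightarrow> dC) (at t0 within S)"
    and "((\<lambda>t. (X t - X t0) / (t - t0)) \<longlongrightarrow> dX) (at t0 within S)"
    using dC dX by (simp_all add: has_field_derivative_iff)
  from tendsto_divide[OF tendsto_add[OF this(1) tendsto_mult[OF a this(2)]]
      tendsto_diff[OF tendsto_const b]]
  have lim: "((\<lambda>t. ((C t - C t0) / (t - t0) + a t * ((X t - X t0) / (t - t0))) / (1 - b t))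
      \<longlongrightarrow> (dC + pd1 g (X t0, T t0) * dX) / (1 - pd2 g (X t0, T t0))) (at t0 within S)"
    using nondeg by simp
  have "\<forall>\<^sub>F t in at t0 within S. b t \<noteq> 1"
    using b nondeg by (rule tendsto_imp_eventually_ne)
  moreover have "\<forall>\<^sub>F t in at t0 within S. t \<in> S \<and> t \<noteq> t0"
    by (rule eventually_at_within_memI) simp
  ultimately have "\<forall>\<^sub>F t in at t0 within S.
      ((C t - C t0) / (t - t0) + a t * ((X t - X t0) / (t - t0))) / (1 - b t) = (T t - T t0) / (t - t0)"
  proof eventually_elim
    case (elim t)
    have key: "(T t - T t0) * (1 - b t) = (C t - C t0) + a t * (X t - X t0)"
      using incr[of t] eq[of t] eq[OF t0] elim by (simp add: algebra_simps)
    have "(T t - T t0) / (t - t0) = (T t - T t0) * (1 - b t) / (t - t0) / (1 - b t)"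
      using elim by simp
    also have "\<dots> = ((C t - C t0) / (t - t0) + a t * ((X t - X t0) / (t - t0))) / (1 - b t)"
      unfolding key by (simp add: add_divide_distrib)
    finally show ?case ..
  qed
  with lim have "((\<lambda>t. (T t - T t0) / (t - t0))
      \<longlongrightarrow> (dC + pd1 g (X t0, T t0) * dX) / (1 - pd2 g (X t0, T t0))) (at t0 within S)"
    by (rule Lim_transform_eventually)
  then show ?thesis by (simp add: has_field_derivative_iff)
qed

lemma Cs_on_A_compose:
  assumes "Cs_on_A k g" "Cs_on_A k u" "Cs_on_A k v" "\<And>p. p \<in> Astrip \<Longrightarrow> (u p, v p) \<in> Astrip"
  shows "Cs_on_A k (\<lambda>p. g (u p, v p))"
  using assms
proof (induction k arbitrary: g u v)
  case 0
  have "continuous_on Astrip (\<lambda>p. g (u p, v p))"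
    by (rule continuous_on_compose2[of Astrip g Astrip "\<lambda>p. (u p, v p)", simplified])
      (use 0 in \<open>auto simp: Cs_on_A_0_iff intro: continuous_on_Pair\<close>)
  then show ?case by (simp add: Cs_on_A_0_iff)
next
  case (Suc k)
  note g = Cs_on_AD[OF Suc.prems(1)] and u = Cs_on_AD[OF Suc.prems(2)]
    and v = Cs_on_AD[OF Suc.prems(3)]
  have uk: "Cs_on_A k u" and vk: "Cs_on_A k v" using Suc.prems(2,3) Cs_on_A_Suc_imp by blast+
  have gd: "has_partials_on_A g" "continuous_on Astrip (pd1 g)" "continuous_on Astrip (pd2 g)"
    using Cs_on_A_imp_has_partials[OF Suc.prems(1)] Cs_on_A_imp_continuous g(3,5) by blast+
  have g1: "Cs_on_A k (\<lambda>p. pd1 g (u p, v p))" and g2: "Cs_on_A k (\<lambda>p. pd2 g (u p, v p))"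
    by (rule Suc.IH[OF g(3) uk vk] Suc.IH[OF g(5) uk vk], erule Suc.prems(4))+
  show ?case
  proof (rule Cs_on_AI[where Dxi="\<lambda>p. pd1 g (u p, v p) * pd1 u p + pd2 g (u p, v p) * pd1 v p"
                        and Deta="\<lambda>p. pd1 g (u p, v p) * pd2 u p + pd2 g (u p, v p) * pd2 v p"])
    show "continuous_on Astrip (\<lambda>p. g (u p, v p))"
      using Suc.IH[OF Cs_on_A_Suc_imp[OF Suc.prems(1)] uk vk] Suc.prems(4)
      by (blast intro: Cs_on_A_imp_continuous)
    fix p assume p: "p \<in> Astrip"
    obtain x y where xy: "p = (x, y)" by (cases p)
    have y: "y \<in> {0..1}" using p xy by (simp add: mem_Astrip_iff)
    show "has_partial1 (\<lambda>p. g (u p, v p)) (pd1 g (u p, v p) * pd1 u p + pd2 g (u p, v p) * pd1 v p) p"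
      unfolding has_partial1_def xy fst_conv snd_conv
      using chain_rule_partials[OF gd, where S=UNIV and U="\<lambda>t. u (t, y)" and V="\<lambda>t. v (t, y)" and z=x]
        Suc.prems(4) y u(2)[OF p] v(2)[OF p]
      by (simp add: mem_Astrip_iff has_partial1_def xy)
    show "has_partial2 (\<lambda>p. g (u p, v p)) (pd1 g (u p, v p) * pd2 u p + pd2 g (u p, v p) * pd2 v p) p"
      unfolding has_partial2_def xy fst_conv snd_conv
      using chain_rule_partials[OF gd, where S="{0..1}" and U="\<lambda>t. u (x, t)" and V="\<lambda>t. v (x, t)" and z=y]
        Suc.prems(4) y u(4)[OF p] v(4)[OF p]
      by (simp add: mem_Astrip_iff has_partial2_def xy)
  qed (intro Cs_on_A_add Cs_on_A_mult g1 g2 u(3,5) v(3,5))+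
qed

section \<open>Periodic functions and the C^s norm\<close>

lemma A_fun_shift_Ints:
  assumes "A_fun g" "y \<in> {0..1}" "x' - x \<in> \<int>"
  shows "g (x', y) = g (x, y)"
proof -
  have "g (x + of_int n, y) = g (x, y)" for n
  proof (induction n rule: int_induct[where k=0])
    case (step1 i)
    have "g (x + of_int (i + 1), y) = g ((x + of_int i) + 1, y)" by (simp add: add.assoc)
    also have "\<dots> = g (x + of_int i, y)" using assms(1,2) unfolding A_fun_def by blast
    finally show ?case using step1.IH by simp
  next
    case (step2 i)
    have "g (x + of_int i, y) = g ((x + of_int (i - 1)) + 1, y)" by (simp add: algebra_simps)
    also have "\<dots> = g (x + of_int (i - 1), y)" using assms(1,2) unfolding A_fun_def by blast
    finally show ?case using step2.IH by simp
  qed simp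
  moreover obtain n where "x' - x = of_int n" using assms(3) by (rule Ints_cases)
  then have "x' = x + of_int n" by simp
  ultimately show ?thesis by simp
qed

lemma A_fun_pd1:
  assumes "A_fun g"
  shows "A_fun (pd1 g)"
  unfolding A_fun_def
proof (intro allI impI)
  fix \<xi> \<eta> :: real assume "\<eta> \<in> {0..1}"
  with assms have "(\<lambda>t. g (t + 1, \<eta>)) = (\<lambda>t. g (t, \<eta>))" unfolding A_fun_def by auto
  then have "((\<lambda>t. g (t, \<eta>)) has_real_derivative d) (at (\<xi> + 1)) \<longleftrightarrow>
      ((\<lambda>t. g (t, \<eta>)) has_real_derivative d) (at \<xi>)" for d
    using DERIV_shift[of "\<lambda>t. g (t, \<eta>)" d \<xi> 1] by simp
  then show "pd1 g (\<xi> + 1, \<eta>) = pd1 g (\<xi>, \<eta>)" unfolding pd1_def by simp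
qed

lemma A_fun_pd2:
  assumes "A_fun g"
  shows "A_fun (pd2 g)"
  unfolding A_fun_def
proof (intro allI impI)
  fix \<xi> \<eta> :: real assume "\<eta> \<in> {0..1}"
  have shift: "t \<in> {0..1} \<Longrightarrow> g (\<xi> + 1, t) = g (\<xi>, t)" for t
    using assms unfolding A_fun_def by auto
  have "((\<lambda>t. g (\<xi> + 1, t)) has_real_derivative d) (at \<eta> within {0..1}) \<longleftrightarrow>
      ((\<lambda>t. g (\<xi>, t)) has_real_derivative d) (at \<eta> within {0..1})" for d
    by (intro iffI; erule has_field_derivative_transform_within[where d=1])
      (use \<open>\<eta> \<in> {0..1}\<close> shift in auto)
  then show "pd2 g (\<xi> + 1, \<eta>) = pd2 g (\<xi>, \<eta>)" unfolding pd2_def by simp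
qed

lemma A_fun_partials: "A_fun g \<Longrightarrow> h \<in> partials k g \<Longrightarrow> A_fun h"
  by (induction k arbitrary: h) (auto intro: A_fun_pd1 A_fun_pd2)

text \<open>By periodicity the values on the strip are those on the compact square [0,1] x [0,1].\<close>

lemma A_fun_bounded:
  assumes "A_fun h" "continuous_on Astrip h"
  obtains B where "\<And>p. p \<in> Astrip \<Longrightarrow> \<bar>h p\<bar> \<le> B"
proof -
  have "{0..1} \<times> {0..1} \<subseteq> Astrip" by (auto simp: Astrip_def)
  then have "continuous_on ({0..1} \<times> {0..1}) h"
    using assms(2) by (rule continuous_on_subset[rotated])
  then have "compact (h ` ({0..1} \<times> {0..1::real}))"
    by (intro compact_continuous_image compact_Times compact_Icc)
  then obtain B where B: "\<forall>x\<in>h ` ({0..1} \<times> {0..1}). norm x \<le> B"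
    using compact_imp_bounded bounded_iff by metis
  show ?thesis
  proof (rule that)
    fix p assume p: "p \<in> Astrip"
    obtain x y where xy: "p = (x, y)" by (cases p)
    have y: "y \<in> {0..1}" using p xy by (simp add: mem_Astrip_iff)
    have "h (x, y) = h (frac x, y)"
      using A_fun_shift_Ints[OF assms(1) y, of x "frac x"] by (simp add: frac_def)
    moreover have "frac x \<in> {0..1}" using frac_lt_1[of x] by (simp add: frac_ge_0 less_imp_le)
    ultimately show "\<bar>h p\<bar> \<le> B" using B y xy by auto
  qed
qed

lemma abs_partial_le_Cs_norm:
  assumes "A_fun g" "Cs_on_A s g" "k \<le> s" "h \<in> partials k g" "p \<in> Astrip"
  shows "\<bar>h p\<bar> \<le> Cs_norm s g"
proof -
  define P where "P = (\<Union>k\<le>s. partials k g)"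
  have "\<exists>B. \<forall>p\<in>Astrip. \<bar>h p\<bar> \<le> B" if "h \<in> P" for h
  proof -
    obtain k where "k \<le> s" "h \<in> partials k g" using \<open>h \<in> P\<close> unfolding P_def by auto
    then have "A_fun h" "continuous_on Astrip h"
      using A_fun_partials assms(1,2) unfolding Cs_on_A_def by blast+
    then show ?thesis using A_fun_bounded by metis
  qed
  then obtain B where B: "\<And>h p. h \<in> P \<Longrightarrow> p \<in> Astrip \<Longrightarrow> \<bar>h p\<bar> \<le> B h" by metis
  have "finite P" unfolding P_def using finite_partials by blast
  have "bdd_above {\<bar>h p\<bar> | k h p. k \<le> s \<and> h \<in> partials k g \<and> p \<in> Astrip}"
  proof (rule bdd_aboveI[where M="Max (B ` P)"], clarify)
    fix k h p assume "k \<le> s" "h \<in> partials k g" "p \<in> Astrip"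
    then have "h \<in> P" unfolding P_def by auto
    with \<open>p \<in> Astrip\<close> have "\<bar>h p\<bar> \<le> B h" by (rule B[rotated])
    also have "B h \<le> Max (B ` P)" using \<open>finite P\<close> \<open>h \<in> P\<close> by simp
    finally show "\<bar>h p\<bar> \<le> Max (B ` P)" .
  qed
  then show ?thesis
    unfolding Cs_norm_def using assms(3-5) by (intro cSup_upper) blast+
qed

section \<open>The perturbed twist map\<close>

locale small_twist =
  fixes \<rho> :: "real \<times> real \<Rightarrow> real" and s :: nat
  assumes periodic: "A_fun \<rho>" and smooth: "Cs_on_A s \<rho>" and s_pos: "1 \<le> s"
    and vanish_0: "\<And>\<xi>. \<rho> (\<xi>, 0) = 0" and vanish_1: "\<And>\<xi>. \<rho> (\<xi>, 1) = 0"
    and pd1_small: "\<And>q. q \<in> Astrip \<Longrightarrow> \<bar>pd1 \<rho> q\<bar> \<le> 1/2"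
    and pd2_small: "\<And>q. q \<in> Astrip \<Longrightarrow> \<bar>pd2 \<rho> q\<bar> \<le> 1/2"
begin

lemma smooth_Suc: "Cs_on_A (Suc (s - 1)) \<rho>"
  using smooth s_pos by simp

lemma has_partials: "has_partials_on_A \<rho>"
  using Cs_on_A_imp_has_partials[OF smooth_Suc] .

lemma Cs_pd1: "Cs_on_A (s - 1) (pd1 \<rho>)" and Cs_pd2: "Cs_on_A (s - 1) (pd2 \<rho>)"
  using Cs_on_AD(3,5)[OF smooth_Suc] .

lemma continuous_pd1: "continuous_on Astrip (pd1 \<rho>)"
  and continuous_pd2: "continuous_on Astrip (pd2 \<rho>)"
  using Cs_on_A_imp_continuous Cs_pd1 Cs_pd2 by blast+

lemma lipschitz_eta:
  assumes "t1 \<in> {0..1}" "t2 \<in> {0..1}"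
  shows "\<bar>\<rho> (x, t2) - \<rho> (x, t1)\<bar> \<le> \<bar>t2 - t1\<bar> / 2"
proof -
  have p: "(x, t1) \<in> Astrip" "(x, t2) \<in> Astrip" using assms by (auto simp: mem_Astrip_iff)
  obtain \<theta>1 \<theta>2 where \<theta>2: "\<theta>2 \<in> {min t1 t2..max t1 t2}"
    and eq: "\<rho> (x, t2) - \<rho> (x, t1) = (x - x) * pd1 \<rho> (\<theta>1, t2) + (t2 - t1) * pd2 \<rho> (x, \<theta>2)"
    by (rule increment_mean_value[OF has_partials p])
  have "(x, \<theta>2) \<in> Astrip" using \<theta>2 assms by (auto simp: mem_Astrip_iff)
  then have "\<bar>t2 - t1\<bar> * \<bar>pd2 \<rho> (x, \<theta>2)\<bar> \<le> \<bar>t2 - t1\<bar> * (1/2)"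
    by (intro mult_left_mono pd2_small) auto
  then show ?thesis using eq by (simp add: abs_mult)
qed

lemma abs_rho_le:
  assumes "y \<in> {0..1}"
  shows "\<bar>\<rho> (x, y)\<bar> \<le> y / 2" "\<bar>\<rho> (x, y)\<bar> \<le> (1 - y) / 2"
  using lipschitz_eta[of 0 y x] lipschitz_eta[of y 1 x] assms vanish_0[of x] vanish_1[of x] by auto

text \<open>The second components of the map (\<sigma> = -1) and of its inverse (\<sigma> = 1) solve
  t + \<sigma> \<rho>(x, t) = c.\<close>

definition eta_solve :: "real \<Rightarrow> real \<Rightarrow> real \<Rightarrow> real" where
  "eta_solve \<sigma> x c = (THE t. t \<in> {0..1} \<and> t + \<sigma> * \<rho> (x, t) = c)"

lemma eta_solve_ex1:
  assumes \<sigma>: "\<bar>\<sigma>\<bar> \<le> 1" and c: "c \<in> {0..1}"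
  shows "\<exists>!t. t \<in> {0..1} \<and> t + \<sigma> * \<rho> (x, t) = c"
proof -
  have "continuous_on {0..1} (\<lambda>t. \<rho> (x, t))"
    by (rule continuous_on_compose2[OF Cs_on_A_imp_continuous[OF smooth], of "{0..1}" "\<lambda>t. (x, t)"])
      (auto intro: continuous_intros simp: mem_Astrip_iff)
  then have "continuous_on {0..1} (\<lambda>t. t + \<sigma> * \<rho> (x, t))" by (intro continuous_intros)
  then obtain t where t: "t \<in> {0..1}" "t + \<sigma> * \<rho> (x, t) = c"
    using IVT'[of "\<lambda>t. t + \<sigma> * \<rho> (x, t)" 0 c 1] c vanish_0 vanish_1 by auto
  show ?thesis
  proof (rule ex1I[of _ t])
    fix t' assume t': "t' \<in> {0..1} \<and> t' + \<sigma> * \<rho> (x, t') = c"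
    have "t' - t = \<sigma> * (\<rho> (x, t) - \<rho> (x, t'))" using t t' by (simp add: algebra_simps)
    then have "\<bar>t' - t\<bar> = \<bar>\<sigma>\<bar> * \<bar>\<rho> (x, t) - \<rho> (x, t')\<bar>" by (simp add: abs_mult)
    also have "\<dots> \<le> \<bar>\<rho> (x, t) - \<rho> (x, t')\<bar>" using \<sigma> by (simp add: mult_left_le_one_le)
    also have "\<dots> \<le> \<bar>t' - t\<bar> / 2" using lipschitz_eta t t' by (simp add: abs_minus_commute)
    finally show "t' = t" by simp
  qed (use t in simp)
qed

lemma eta_solve:
  assumes "\<bar>\<sigma>\<bar> \<le> 1" "c \<in> {0..1}"
  shows "eta_solve \<sigma> x c \<in> {0..1}" "eta_solve \<sigma> x c + \<sigma> * \<rho> (x, eta_solve \<sigma> x c) = c"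
  using theI'[OF eta_solve_ex1[OF assms, of x]] unfolding eta_solve_def by auto

lemma eta_solve_eqI:
  assumes "\<bar>\<sigma>\<bar> \<le> 1" "c \<in> {0..1}" "t \<in> {0..1}" "t + \<sigma> * \<rho> (x, t) = c"
  shows "eta_solve \<sigma> x c = t"
  unfolding eta_solve_def using the1_equality[OF eta_solve_ex1[OF assms(1,2)]] assms(3,4) by blast

lemma eta_solve_periodic:
  assumes "x' - x \<in> \<int>"
  shows "eta_solve \<sigma> x' c = eta_solve \<sigma> x c"
proof -
  have "(\<lambda>t. t \<in> {0..1} \<and> t + \<sigma> * \<rho> (x', t) = c) = (\<lambda>t. t \<in> {0..1} \<and> t + \<sigma> * \<rho> (x, t) = c)"
    using A_fun_shift_Ints[OF periodic _ assms] by auto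
  then show ?thesis unfolding eta_solve_def by simp
qed

definition xi_plus :: "real \<times> real \<Rightarrow> real" where
  "xi_plus p = fst p + snd p + \<rho> p"

definition eta_plus :: "real \<times> real \<Rightarrow> real" where
  "eta_plus p = eta_solve (-1) (xi_plus p) (snd p + \<rho> p)"

definition xi_minus :: "real \<times> real \<Rightarrow> real" where
  "xi_minus p = fst p - snd p + \<rho> p"

definition eta_minus :: "real \<times> real \<Rightarrow> real" where
  "eta_minus p = eta_solve 1 (xi_minus p) (snd p - \<rho> p)"

definition twist :: "real \<times> real \<Rightarrow> real \<times> real" where
  "twist p = (xi_plus p, eta_plus p)"

definition twist_inv :: "real \<times> real \<Rightarrow> real \<times> real" where
  "twist_inv p = (xi_minus p, eta_minus p)"

lemma snd_plus_rho_range: "p \<in> Astrip \<Longrightarrow> snd p + \<rho> p \<in> {0..1}"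
  and snd_minus_rho_range: "p \<in> Astrip \<Longrightarrow> snd p - \<rho> p \<in> {0..1}"
  using abs_rho_le[of "snd p" "fst p"] by (auto simp: mem_Astrip_iff abs_le_iff)

lemma eta_plus:
  assumes "p \<in> Astrip"
  shows "eta_plus p \<in> {0..1}" "eta_plus p - \<rho> (xi_plus p, eta_plus p) = snd p + \<rho> p"
  using eta_solve[of "-1", OF _ snd_plus_rho_range[OF assms], of "xi_plus p"]
  by (simp_all add: eta_plus_def)

lemma eta_plus_eqI:
  assumes "p \<in> Astrip" "t \<in> {0..1}" "t - \<rho> (xi_plus p, t) = snd p + \<rho> p"
  shows "eta_plus p = t"
  using eta_solve_eqI[of "-1", OF _ snd_plus_rho_range[OF assms(1)] assms(2)] assms(3)
  by (simp add: eta_plus_def)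

lemma eta_minus:
  assumes "p \<in> Astrip"
  shows "eta_minus p \<in> {0..1}" "eta_minus p + \<rho> (xi_minus p, eta_minus p) = snd p - \<rho> p"
  using eta_solve[of 1, OF _ snd_minus_rho_range[OF assms], of "xi_minus p"]
  by (simp_all add: eta_minus_def)

lemma eta_minus_eqI:
  assumes "p \<in> Astrip" "t \<in> {0..1}" "t + \<rho> (xi_minus p, t) = snd p - \<rho> p"
  shows "eta_minus p = t"
  using eta_solve_eqI[of 1, OF _ snd_minus_rho_range[OF assms(1)] assms(2)] assms(3)
  by (simp add: eta_minus_def)

lemma twist_in_Astrip: "p \<in> Astrip \<Longrightarrow> twist p \<in> Astrip"
  using eta_plus(1) by (simp add: twist_def mem_Astrip_iff)

lemma twist_inv_in_Astrip: "p \<in> Astrip \<Longrightarrow> twist_inv p \<in> Astrip"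
  using eta_minus(1) by (simp add: twist_inv_def mem_Astrip_iff)

lemma Cs_xi_plus: "k \<le> s \<Longrightarrow> Cs_on_A k xi_plus"
  unfolding xi_plus_def[abs_def]
  by (intro Cs_on_A_add Cs_on_A_fst Cs_on_A_snd Cs_on_A_mono[OF smooth])

lemma Cs_snd_plus_rho: "k \<le> s \<Longrightarrow> Cs_on_A k (\<lambda>p. snd p + \<rho> p)"
  by (intro Cs_on_A_add Cs_on_A_snd Cs_on_A_mono[OF smooth])

lemma eta_plus_lipschitz:
  assumes p: "p \<in> Astrip" and q: "q \<in> Astrip"
  shows "\<bar>eta_plus q - eta_plus p\<bar> \<le>
    2 * \<bar>(snd q + \<rho> q) - (snd p + \<rho> p)\<bar> + \<bar>xi_plus q - xi_plus p\<bar>"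
proof -
  have P: "(xi_plus p, eta_plus p) \<in> Astrip" "(xi_plus q, eta_plus q) \<in> Astrip"
    using eta_plus(1) p q by (auto simp: mem_Astrip_iff)
  obtain \<theta>1 \<theta>2 where \<theta>2: "\<theta>2 \<in> {min (eta_plus p) (eta_plus q)..max (eta_plus p) (eta_plus q)}"
    and incr: "\<rho> (xi_plus q, eta_plus q) - \<rho> (xi_plus p, eta_plus p) =
      (xi_plus q - xi_plus p) * pd1 \<rho> (\<theta>1, eta_plus q) + (eta_plus q - eta_plus p) * pd2 \<rho> (xi_plus p, \<theta>2)"
    by (rule increment_mean_value[OF has_partials P])
  have "\<theta>2 \<in> {0..1}"
    using \<theta>2 eta_plus(1)[OF p] eta_plus(1)[OF q] by (auto simp: min_def max_def split: if_splits)
  then have A: "\<bar>(xi_plus q - xi_plus p) * pd1 \<rho> (\<theta>1, eta_plus q)\<bar> \<le> \<bar>xi_plus q - xi_plus p\<bar> * (1/2)"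
    and B: "\<bar>(eta_plus q - eta_plus p) * pd2 \<rho> (xi_plus p, \<theta>2)\<bar> \<le> \<bar>eta_plus q - eta_plus p\<bar> * (1/2)"
    unfolding abs_mult using eta_plus(1)[OF q]
    by (intro mult_left_mono pd1_small pd2_small; simp add: mem_Astrip_iff)+
  have "eta_plus q - eta_plus p = ((snd q + \<rho> q) - (snd p + \<rho> p))
      + (xi_plus q - xi_plus p) * pd1 \<rho> (\<theta>1, eta_plus q)
      + (eta_plus q - eta_plus p) * pd2 \<rho> (xi_plus p, \<theta>2)"
    using eta_plus(2)[OF p] eta_plus(2)[OF q] incr by (simp add: algebra_simps)
  then have "\<bar>eta_plus q - eta_plus p\<bar> = \<bar>((snd q + \<rho> q) - (snd p + \<rho> p))
      + (xi_plus q - xi_plus p) * pd1 \<rho> (\<theta>1, eta_plus q)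
      + (eta_plus q - eta_plus p) * pd2 \<rho> (xi_plus p, \<theta>2)\<bar>"
    by (rule arg_cong[where f=abs])
  also have "\<dots> \<le> \<bar>(snd q + \<rho> q) - (snd p + \<rho> p)\<bar>
      + \<bar>(xi_plus q - xi_plus p) * pd1 \<rho> (\<theta>1, eta_plus q)\<bar>
      + \<bar>(eta_plus q - eta_plus p) * pd2 \<rho> (xi_plus p, \<theta>2)\<bar>"
    by (rule order_trans[OF abs_triangle_ineq add_right_mono[OF abs_triangle_ineq]])
  finally show ?thesis using A B by linarith
qed

lemma continuous_eta_plus: "continuous_on Astrip eta_plus"
  unfolding continuous_on_def
proof
  fix p assume p: "p \<in> Astrip"
  have bound: "\<forall>\<^sub>F q in at p within Astrip. norm (eta_plus q - eta_plus p) \<le>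
      2 * \<bar>(snd q + \<rho> q) - (snd p + \<rho> p)\<bar> + \<bar>xi_plus q - xi_plus p\<bar>"
    by (rule eventually_at_within_memI) (simp add: eta_plus_lipschitz[OF p])
  have "((\<lambda>q. snd q + \<rho> q) \<longlongrightarrow> snd p + \<rho> p) (at p within Astrip)"
    and "(xi_plus \<longlongrightarrow> xi_plus p) (at p within Astrip)"
    using Cs_on_A_imp_continuous[OF Cs_snd_plus_rho] Cs_on_A_imp_continuous[OF Cs_xi_plus] p
    unfolding continuous_on_def by blast+
  from tendsto_add[OF tendsto_mult[OF tendsto_const tendsto_rabs_zero[OF LIM_zero[OF this(1)]]]
      tendsto_rabs_zero[OF LIM_zero[OF this(2)]]]
  have "((\<lambda>q. 2 * \<bar>(snd q + \<rho> q) - (snd p + \<rho> p)\<bar> + \<bar>xi_plus q - xi_plus p\<bar>) \<longlongrightarrow> 0)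
      (at p within Astrip)"
    by simp
  with bound show "(eta_plus \<longlongrightarrow> eta_plus p) (at p within Astrip)"
    by (rule LIM_zero_cancel[OF Lim_null_comparison])
qed

lemma has_partial1_eta_plus:
  assumes p: "p \<in> Astrip"
  shows "has_partial1 eta_plus
    ((pd1 \<rho> p + pd1 \<rho> (twist p) * (1 + pd1 \<rho> p)) / (1 - pd2 \<rho> (twist p))) p"
proof -
  obtain x y where xy: "p = (x, y)" by (cases p)
  have line: "\<And>t. (t, y) \<in> Astrip" using p xy by (auto simp: mem_Astrip_iff)
  have \<rho>1: "((\<lambda>t. \<rho> (t, y)) has_real_derivative pd1 \<rho> (x, y)) (at x)"
    using has_partials line unfolding has_partials_on_A_def has_partial1_def by fastforce
  have "continuous_on UNIV (\<lambda>t. eta_plus (t, y))"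
    by (rule continuous_on_compose2[OF continuous_eta_plus]) (auto intro: continuous_intros line)
  then have T: "((\<lambda>t. eta_plus (t, y)) \<longlongrightarrow> eta_plus (x, y)) (at x)"
    by (simp add: continuous_on_eq_continuous_at isCont_def)
  have "((\<lambda>t. eta_plus (t, y)) has_real_derivative
      (pd1 \<rho> (x, y) + pd1 \<rho> (xi_plus (x, y), eta_plus (x, y)) * (1 + pd1 \<rho> (x, y)))
      / (1 - pd2 \<rho> (xi_plus (x, y), eta_plus (x, y)))) (at x)"
  proof (rule implicit_derivative[OF has_partials continuous_pd1 continuous_pd2, where S=UNIV
        and X="\<lambda>t. xi_plus (t, y)" and C="\<lambda>t. y + \<rho> (t, y)"])
    show "((\<lambda>t. xi_plus (t, y)) has_real_derivative 1 + pd1 \<rho> (x, y)) (at x)"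
      using DERIV_add[OF DERIV_add[OF DERIV_ident DERIV_const] \<rho>1] by (simp add: xi_plus_def)
    show "((\<lambda>t. y + \<rho> (t, y)) has_real_derivative pd1 \<rho> (x, y)) (at x)"
      using DERIV_add[OF DERIV_const \<rho>1] by simp
    show "pd2 \<rho> (xi_plus (x, y), eta_plus (x, y)) \<noteq> 1"
      using pd2_small[OF twist_in_Astrip[OF p]] by (auto simp: twist_def xy)
  qed (use eta_plus line T in \<open>auto simp: mem_Astrip_iff\<close>)
  then show ?thesis by (simp add: has_partial1_def xy twist_def)
qed

lemma has_partial2_eta_plus:
  assumes p: "p \<in> Astrip"
  shows "has_partial2 eta_plus
    ((1 + pd2 \<rho> p + pd1 \<rho> (twist p) * (1 + pd2 \<rho> p)) / (1 - pd2 \<rho> (twist p))) p"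
proof -
  obtain x y where xy: "p = (x, y)" by (cases p)
  have y: "y \<in> {0..1}" and line: "\<And>t. t \<in> {0..1} \<Longrightarrow> (x, t) \<in> Astrip"
    using p xy by (auto simp: mem_Astrip_iff)
  have \<rho>2: "((\<lambda>t. \<rho> (x, t)) has_real_derivative pd2 \<rho> (x, y)) (at y within {0..1})"
    using has_partials p unfolding has_partials_on_A_def has_partial2_def xy by fastforce
  have "continuous_on {0..1} (\<lambda>t. eta_plus (x, t))"
    by (rule continuous_on_compose2[OF continuous_eta_plus]) (auto intro: continuous_intros line)
  then have T: "((\<lambda>t. eta_plus (x, t)) \<longlongrightarrow> eta_plus (x, y)) (at y within {0..1})"
    using y by (simp add: continuous_on_eq_continuous_within continuous_within)
  have "((\<lambda>t. eta_plus (x, t)) has_real_derivative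
      (1 + pd2 \<rho> (x, y) + pd1 \<rho> (xi_plus (x, y), eta_plus (x, y)) * (1 + pd2 \<rho> (x, y)))
      / (1 - pd2 \<rho> (xi_plus (x, y), eta_plus (x, y)))) (at y within {0..1})"
  proof (rule implicit_derivative[OF has_partials continuous_pd1 continuous_pd2, where S="{0..1}"
        and X="\<lambda>t. xi_plus (x, t)" and C="\<lambda>t. t + \<rho> (x, t)"])
    show "((\<lambda>t. xi_plus (x, t)) has_real_derivative 1 + pd2 \<rho> (x, y)) (at y within {0..1})"
      using DERIV_add[OF DERIV_add[OF DERIV_const DERIV_ident] \<rho>2] by (simp add: xi_plus_def)
    show "((\<lambda>t. t + \<rho> (x, t)) has_real_derivative 1 + pd2 \<rho> (x, y)) (at y within {0..1})"
      using DERIV_add[OF DERIV_ident \<rho>2] .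
    show "pd2 \<rho> (xi_plus (x, y), eta_plus (x, y)) \<noteq> 1"
      using pd2_small[OF twist_in_Astrip[OF p]] by (auto simp: twist_def xy)
  qed (use eta_plus line T y in \<open>auto simp: mem_Astrip_iff\<close>)
  then show ?thesis by (simp add: has_partial2_def xy twist_def)
qed

lemma Cs_eta_plus: "k \<le> s \<Longrightarrow> Cs_on_A k eta_plus"
proof (induction k)
  case 0
  then show ?case by (simp add: Cs_on_A_0_iff continuous_eta_plus)
next
  case (Suc k)
  then have k: "k \<le> s - 1" "k \<le> s" by auto
  have compose: "Cs_on_A k (\<lambda>p. h (twist p))" if "Cs_on_A k h" for h
    unfolding twist_def
    by (rule Cs_on_A_compose[OF that Cs_xi_plus[OF k(2)] Suc.IH[OF k(2)]])
      (use twist_in_Astrip in \<open>simp add: twist_def\<close>)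
  have r1: "Cs_on_A k (pd1 \<rho>)" and r2: "Cs_on_A k (pd2 \<rho>)"
    using Cs_on_A_mono[OF Cs_pd1 k(1)] Cs_on_A_mono[OF Cs_pd2 k(1)] .
  have c1: "Cs_on_A k (\<lambda>p. pd1 \<rho> (twist p))" and c2: "Cs_on_A k (\<lambda>p. 1 - pd2 \<rho> (twist p))"
    using compose[OF r1] Cs_on_A_diff[OF Cs_on_A_const compose[OF r2]] .
  have nz: "\<forall>p\<in>Astrip. 1 - pd2 \<rho> (twist p) \<noteq> 0"
    using pd2_small twist_in_Astrip by fastforce
  show ?case
  proof (rule Cs_on_AI[OF continuous_eta_plus has_partial1_eta_plus _ has_partial2_eta_plus])
    show "Cs_on_A k (\<lambda>p. (pd1 \<rho> p + pd1 \<rho> (twist p) * (1 + pd1 \<rho> p)) / (1 - pd2 \<rho> (twist p)))"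
      by (intro Cs_on_A_divide[OF _ c2 nz] Cs_on_A_add Cs_on_A_mult Cs_on_A_const r1 c1)
    show "Cs_on_A k (\<lambda>p. (1 + pd2 \<rho> p + pd1 \<rho> (twist p) * (1 + pd2 \<rho> p)) / (1 - pd2 \<rho> (twist p)))"
      by (intro Cs_on_A_divide[OF _ c2 nz] Cs_on_A_add Cs_on_A_mult Cs_on_A_const r2 c1)
  qed
qed

lemma rho_eqA: "p \<in> Astrip \<Longrightarrow> q \<in> Astrip \<Longrightarrow> eqA p q \<Longrightarrow> \<rho> p = \<rho> q"
  using A_fun_shift_Ints[OF periodic, of "snd q" "fst p" "fst q"]
  by (cases p, cases q) (auto simp: eqA_def mem_Astrip_iff)

lemma A_map_twist: "A_map twist"
  unfolding A_map_def
proof (intro conjI ballI impI)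
  fix p q assume p: "p \<in> Astrip" and q: "q \<in> Astrip" and pq: "eqA p q"
  have "\<rho> p = \<rho> q" using rho_eqA[OF p q pq] .
  then have "xi_plus p - xi_plus q \<in> \<int>" and "snd p + \<rho> p = snd q + \<rho> q"
    using pq by (simp_all add: xi_plus_def eqA_def)
  then show "eqA (twist p) (twist q)"
    using eta_solve_periodic by (simp add: twist_def eta_plus_def eqA_def)
qed (rule twist_in_Astrip)

lemma A_map_twist_inv: "A_map twist_inv"
  unfolding A_map_def
proof (intro conjI ballI impI)
  fix p q assume p: "p \<in> Astrip" and q: "q \<in> Astrip" and pq: "eqA p q"
  have "\<rho> p = \<rho> q" using rho_eqA[OF p q pq] .
  then have "xi_minus p - xi_minus q \<in> \<int>" and "snd p - \<rho> p = snd q - \<rho> q"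
    using pq by (simp_all add: xi_minus_def eqA_def)
  then show "eqA (twist_inv p) (twist_inv q)"
    using eta_solve_periodic by (simp add: twist_inv_def eta_minus_def eqA_def)
qed (rule twist_inv_in_Astrip)

lemma is_F_twist: "is_F s \<rho> twist"
  unfolding is_F_def
proof (intro conjI allI ballI)
  show "A_map twist" by (rule A_map_twist)
  show "Cs_map s twist"
    unfolding Cs_map_def twist_def using Cs_xi_plus Cs_eta_plus by simp
  fix \<xi> :: real
  have "eta_plus (\<xi>, 0) = 0" by (rule eta_plus_eqI) (auto simp: mem_Astrip_iff vanish_0)
  then show "eqA (twist (\<xi>, 0)) (\<xi>, 0)" by (simp add: twist_def xi_plus_def eqA_def vanish_0)
next
  fix p assume "p \<in> Astrip"
  then show "fst (twist p) - (fst p + snd p + \<rho> p) \<in> \<int>"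
    and "snd (twist p) = snd p + \<rho> p + \<rho> (twist p)"
    using eta_plus(2) by (simp_all add: twist_def xi_plus_def algebra_simps)
qed

lemma is_F_unique:
  assumes G: "is_F s \<rho> G" and p: "p \<in> Astrip"
  shows "eqA (G p) (twist p)"
proof -
  have Gp: "G p \<in> Astrip" using G p unfolding is_F_def A_map_def by blast
  have shift: "fst (G p) - xi_plus p \<in> \<int>" and eq: "snd (G p) = snd p + \<rho> p + \<rho> (G p)"
    using G p unfolding is_F_def xi_plus_def by auto
  have "\<rho> (G p) = \<rho> (xi_plus p, snd (G p))"
    using A_fun_shift_Ints[OF periodic _ shift] Gp by (cases "G p") (auto simp: mem_Astrip_iff)
  then have "eta_plus p = snd (G p)"
    using Gp eq by (intro eta_plus_eqI[OF p]) (auto simp: mem_Astrip_iff)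
  then show ?thesis using shift by (simp add: eqA_def twist_def)
qed

lemma twist_fixes_top: "eqA (twist (\<xi>, 1)) (\<xi>, 1)"
proof -
  have "eta_plus (\<xi>, 1) = 1" by (rule eta_plus_eqI) (auto simp: mem_Astrip_iff vanish_1)
  then show ?thesis by (simp add: twist_def xi_plus_def eqA_def vanish_1)
qed

lemma twist_twist_inv: "p \<in> Astrip \<Longrightarrow> eqA (twist (twist_inv p)) p"
proof -
  assume p: "p \<in> Astrip"
  obtain x y where xy: "p = (x, y)" by (cases p)
  have e: "eta_minus p + \<rho> (twist_inv p) = y - \<rho> p"
    using eta_minus(2)[OF p] by (simp add: twist_inv_def xy)
  then have xi: "xi_plus (twist_inv p) = x"
    by (simp add: xi_plus_def twist_inv_def xi_minus_def xy)
  have "eta_plus (twist_inv p) = y"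
    using p e xi twist_inv_in_Astrip[OF p]
    by (intro eta_plus_eqI) (auto simp: xy twist_inv_def mem_Astrip_iff)
  with xi show ?thesis by (simp add: twist_def eqA_def xy)
qed

lemma twist_inv_twist: "p \<in> Astrip \<Longrightarrow> eqA (twist_inv (twist p)) p"
proof -
  assume p: "p \<in> Astrip"
  obtain x y where xy: "p = (x, y)" by (cases p)
  have e: "eta_plus p - \<rho> (twist p) = y + \<rho> p"
    using eta_plus(2)[OF p] by (simp add: twist_def xy)
  then have xi: "xi_minus (twist p) = x"
    by (simp add: xi_plus_def twist_def xi_minus_def xy)
  have "eta_minus (twist p) = y"
    using p e xi twist_in_Astrip[OF p]
    by (intro eta_minus_eqI) (auto simp: xy twist_def mem_Astrip_iff)
  with xi show ?thesis by (simp add: twist_inv_def eqA_def xy)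
qed

lemma twist_inv_formula:
  "p \<in> Astrip \<Longrightarrow> fst (twist_inv p) - (fst p - snd p + \<rho> p) \<in> \<int> \<and>
     snd (twist_inv p) = snd p - \<rho> p - \<rho> (twist_inv p)"
  using eta_minus(2)[of p] by (simp add: twist_inv_def xi_minus_def)

end

theorem lemmaA1:
  fixes s :: nat
  assumes "s \<ge> 2"
  shows "\<exists>\<epsilon>>0. \<forall>\<rho>. A_fun \<rho> \<and> Cs_on_A s \<rho> \<and>
            (\<forall>\<xi>. \<rho> (\<xi>, 0) = 0 \<and> \<rho> (\<xi>, 1) = 0) \<and> Cs_norm s \<rho> < \<epsilon> \<longrightarrow>
          (\<exists>F. is_F s \<rho> F \<and>
               (\<forall>G. is_F s \<rho> G \<longrightarrow> (\<forall>p\<in>Astrip. eqA (G p) (F p))) \<and>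
               (\<forall>\<xi>. eqA (F (\<xi>, 1)) (\<xi>, 1)) \<and>
               (\<exists>Finv. A_map Finv \<and>
                  (\<forall>p\<in>Astrip. eqA (F (Finv p)) p \<and> eqA (Finv (F p)) p) \<and>
                  (\<forall>p\<in>Astrip. fst (Finv p) - (fst p - snd p + \<rho> p) \<in> \<int> \<and>
                     snd (Finv p) = snd p - \<rho> p - \<rho> (Finv p))))"
proof (intro exI[of _ "1/2"] conjI allI impI)
  fix \<rho> assume h: "A_fun \<rho> \<and> Cs_on_A s \<rho> \<and> (\<forall>\<xi>. \<rho> (\<xi>, 0) = 0 \<and> \<rho> (\<xi>, 1) = 0) \<and> Cs_norm s \<rho> < 1/2"
  have "\<bar>h q\<bar> \<le> 1/2" if "h \<in> partials 1 \<rho>" "q \<in> Astrip" for h q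
    using abs_partial_le_Cs_norm[of \<rho> s 1 h q] h assms that by linarith
  then interpret small_twist \<rho> s
    using h assms by unfold_locales auto
  show "\<exists>F. is_F s \<rho> F \<and>
               (\<forall>G. is_F s \<rho> G \<longrightarrow> (\<forall>p\<in>Astrip. eqA (G p) (F p))) \<and>
               (\<forall>\<xi>. eqA (F (\<xi>, 1)) (\<xi>, 1)) \<and>
               (\<exists>Finv. A_map Finv \<and>
                  (\<forall>p\<in>Astrip. eqA (F (Finv p)) p \<and> eqA (Finv (F p)) p) \<and>
                  (\<forall>p\<in>Astrip. fst (Finv p) - (fst p - snd p + \<rho> p) \<in> \<int> \<and>
                     snd (Finv p) = snd p - \<rho> p - \<rho> (Finv p)))"
    using is_F_twist is_F_unique twist_fixes_top A_map_twist_inv twist_twist_inv twist_inv_twist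
      twist_inv_formula by blast
qed simp

end
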